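(* For $t>0$ let $f_t(z)=\big(\frac{z}{z+1}\big)^2\exp(-t/z)$, $z\in\mathbb{C}_+$. There is a constant $C$ such that $f_t\in\mathcal{B}$ and $\|f_t\|_{\mathcal{B}}\le C(1+\log(1+t))$ for all $t>0$.
   Context: $\mathbb{C}_+=\{\Re z>0\}$. $\mathcal{B}$ is the space of holomorphic $f$ on $\mathbb{C}_+$ with $\int_0^\infty\sup_{y}|f'(x+iy)|dx<\infty$, normed by $\|f\|_{\mathcal{B}}=\sup_{\mathbb{C}_+}|f|+\int_0^\infty\sup_{y\in\mathbb{R}}|f'(x+iy)|\,dx$. *)

theory Defs
  imports "HOL-Analysis.Analysis"
begin

definition rhp :: "complex set" where
  "rhp = {z. Re z > 0}"

definition B_deriv_part :: "(complex \<Rightarrow> complex) \<Rightarrow> ennreal" where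
  "B_deriv_part f =
     (\<integral>\<^sup>+ x. (SUP y::real. ennreal (norm (deriv f (Complex x y)))) \<partial>(restrict_space lborel {0<..}))"

definition B_sup_part :: "(complex \<Rightarrow> complex) \<Rightarrow> ennreal" where
  "B_sup_part f = (SUP z\<in>rhp. ennreal (norm (f z)))"

definition B_norm :: "(complex \<Rightarrow> complex) \<Rightarrow> ennreal" where
  "B_norm f = B_sup_part f + B_deriv_part f"

definition in_B :: "(complex \<Rightarrow> complex) \<Rightarrow> bool" where
  "in_B f \<longleftrightarrow> f holomorphic_on rhp \<and> B_norm f < \<infinity>"

definition f_t :: "real \<Rightarrow> complex \<Rightarrow> complex" where
  "f_t t z = (z / (z + 1))^2 * exp (- complex_of_real t / z)"

end

theory Submission
  imports Defs
begin

text \<open>Both factors of f_t have modulus at most 1 on the right half-plane, which bounds the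
  sup-norm part. Writing x = Re z, the derivative
  f_t' z = exp (-t/z) (2z/(z+1)^3 + t/(z+1)^2) is at most 2/(1+x)^2 plus
  min (t/(1+x)^2) (1/x): the second bound uses |exp (-t/z)| = exp (-s) with s = t x/|z|^2 and
  s exp (-s) \<le> 1. Splitting the half-line at 1/(1+t) and 1+t, this minimum integrates to at most
  1 + 2 log (1+t) + 1.\<close>

lemma norm_le_norm_add_one:
  fixes z :: complex
  assumes "Re z \<ge> 0"
  shows "norm z \<le> norm (z + 1)"
proof -
  have "(norm z)^2 \<le> (norm (z + 1))^2"
    unfolding cmod_power2 using assms by (simp add: power2_eq_square algebra_simps)
  then show ?thesis
    by (rule power2_le_imp_le) simp
qed

lemma one_add_Re_le_norm_add_one: "1 + Re z \<le> norm (z + 1)"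
  using complex_Re_le_cmod[of "z + 1"] by simp

lemma norm_exp_neg_of_real_div:
  "norm (exp (- of_real t / z)) = exp (- (t * Re z / (norm z)^2))"
  by (simp add: norm_exp_eq_Re Re_divide cmod_power2)

lemma norm_exp_neg_of_real_div_le_1:
  assumes "t \<ge> 0" "Re z \<ge> 0"
  shows "norm (exp (- of_real t / z)) \<le> 1"
  unfolding norm_exp_neg_of_real_div using assms by simp

lemma mult_exp_neg_le_1: "s * exp (- s) \<le> (1::real)"
proof -
  have "s \<le> exp s"
    using exp_ge_add_one_self[of s] by linarith
  then show ?thesis
    by (simp add: exp_minus field_simps)
qed

lemma norm_exp_neg_of_real_div_mult_le:
  assumes "t \<ge> 0" "Re z > 0"
  shows "norm (exp (- of_real t / z)) * (t / (norm z)^2) \<le> 1 / Re z"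
proof -
  define s where "s = t * Re z / (norm z)^2"
  have "norm (exp (- of_real t / z)) * (t / (norm z)^2) = s * exp (- s) / Re z"
    unfolding norm_exp_neg_of_real_div s_def[symmetric]
    using assms by (auto simp: s_def field_simps)
  also have "\<dots> \<le> 1 / Re z"
    using mult_exp_neg_le_1[of s] assms(2) by (intro divide_right_mono) auto
  finally show ?thesis .
qed

lemma f_t_has_field_derivative:
  assumes "z \<noteq> 0" "z \<noteq> -1"
  shows "(f_t t has_field_derivative
           exp (- of_real t / z) * (2 * z / (z + 1)^3 + of_real t / (z + 1)^2)) (at z)"
proof -
  have "z + 1 \<noteq> 0"
    using assms(2) by (metis eq_neg_iff_add_eq_0)
  have quotient: "((\<lambda>w. (w / (w + 1))^2) has_field_derivative 2 * z / (z + 1)^3) (at z)"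
    using assms(1) \<open>z + 1 \<noteq> 0\<close>
    by (auto intro!: derivative_eq_intros simp: divide_simps power2_eq_square power3_eq_cube)
      (simp add: algebra_simps)
  have exponential: "((\<lambda>w. exp (- of_real t / w)) has_field_derivative
      exp (- of_real t / z) * (of_real t / z^2)) (at z)"
    using assms(1) by (auto intro!: derivative_eq_intros simp: field_simps power2_eq_square)
  show ?thesis
    unfolding f_t_def [abs_def]
  proof (rule DERIV_cong[OF DERIV_mult[OF quotient exponential]])
    show "2 * z / (z + 1)^3 * exp (- of_real t / z)
          + exp (- of_real t / z) * (of_real t / z^2) * (z / (z + 1))^2
        = exp (- of_real t / z) * (2 * z / (z + 1)^3 + of_real t / (z + 1)^2)"
      using assms(1) \<open>z + 1 \<noteq> 0\<close>
      by (simp add: field_simps power2_eq_square power3_eq_cube)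
  qed
qed

lemma holomorphic_on_f_t: "f_t t holomorphic_on rhp"
proof -
  have "f_t t field_differentiable at z" if "Re z > 0" for z
  proof -
    have "z \<noteq> 0" "z \<noteq> -1"
      using that by auto
    then show ?thesis
      using f_t_has_field_derivative field_differentiable_def by blast
  qed
  then show ?thesis
    by (auto simp: rhp_def holomorphic_on_def field_differentiable_at_within)
qed

lemma norm_f_t_le_1:
  assumes "t \<ge> 0" "Re z \<ge> 0"
  shows "norm (f_t t z) \<le> 1"
proof -
  have "norm (z / (z + 1)) \<le> 1"
    using norm_le_norm_add_one[OF assms(2)] by (simp add: norm_divide divide_le_eq_1)
  then show ?thesis
    using norm_exp_neg_of_real_div_le_1[OF assms]
    by (simp add: f_t_def norm_mult norm_power mult_le_one power_le_one)
qed

lemma norm_deriv_f_t_le: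
  assumes "t \<ge> 0" "Re z > 0"
  shows "norm (deriv (f_t t) z) \<le> 2 / (1 + Re z)^2 + min (t / (1 + Re z)^2) (1 / Re z)"
proof -
  let ?E = "norm (exp (- of_real t / z))"
  have "z \<noteq> 0" "z \<noteq> -1"
    using assms(2) by auto
  then have deriv_eq:
      "deriv (f_t t) z = exp (- of_real t / z) * (2 * z / (z + 1)^3 + of_real t / (z + 1)^2)"
    by (rule DERIV_imp_deriv[OF f_t_has_field_derivative])
  have E: "0 \<le> ?E" "?E \<le> 1"
    using norm_exp_neg_of_real_div_le_1 assms by auto
  have z_le: "norm z \<le> norm (z + 1)" and x_le: "1 + Re z \<le> norm (z + 1)"
    using norm_le_norm_add_one one_add_Re_le_norm_add_one assms(2) by auto
  have z_pos: "0 < norm z"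
    using \<open>z \<noteq> 0\<close> by simp
  have triangle:
      "norm (deriv (f_t t) z) \<le> ?E * (2 * norm z / norm (z + 1)^3) + ?E * (t / norm (z + 1)^2)"
    unfolding deriv_eq norm_mult distrib_left[symmetric]
    using norm_triangle_ineq[of "2 * z / (z + 1)^3" "of_real t / (z + 1)^2"] E assms(1)
    by (intro mult_left_mono) (auto simp: norm_divide norm_power)
  have first_term: "?E * (2 * norm z / norm (z + 1)^3) \<le> 2 / (1 + Re z)^2"
  proof -
    have "?E * (2 * norm z / norm (z + 1)^3) \<le> 2 * norm z / norm (z + 1)^3"
      using E z_pos by (intro mult_left_le_one_le) auto
    also have "\<dots> \<le> 2 / norm (z + 1)^2"
      using z_le z_pos by (simp add: divide_simps power3_eq_cube power2_eq_square)
    also have "\<dots> \<le> 2 / (1 + Re z)^2"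
      using x_le assms(2) by (intro divide_left_mono power_mono mult_pos_pos) auto
    finally show ?thesis .
  qed
  have second_term_t: "?E * (t / norm (z + 1)^2) \<le> t / (1 + Re z)^2"
  proof -
    have "?E * (t / norm (z + 1)^2) \<le> t / norm (z + 1)^2"
      using E assms(1) by (intro mult_left_le_one_le) auto
    also have "\<dots> \<le> t / (1 + Re z)^2"
      using x_le assms by (intro divide_left_mono power_mono mult_pos_pos) auto
    finally show ?thesis .
  qed
  have second_term_x: "?E * (t / norm (z + 1)^2) \<le> 1 / Re z"
  proof -
    have "?E * (t / norm (z + 1)^2) \<le> ?E * (t / norm z^2)"
      using E z_le z_pos assms(1)
      by (intro mult_left_mono divide_left_mono power_mono mult_pos_pos) auto
    also have "\<dots> \<le> 1 / Re z"
      by (rule norm_exp_neg_of_real_div_mult_le[OF assms])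
    finally show ?thesis .
  qed
  have "?E * (t / norm (z + 1)^2) \<le> min (t / (1 + Re z)^2) (1 / Re z)"
    using second_term_t second_term_x by (rule min.boundedI)
  from order_trans[OF triangle add_mono[OF first_term this]] show ?thesis .
qed

lemma ennreal_norm_deriv_f_t_le:
  assumes "t \<ge> 0" "x > 0"
  shows "ennreal (norm (deriv (f_t t) (Complex x y))) \<le>
           ennreal (2 / (1 + x)^2) * indicator {0..} x
         + ennreal t * indicator {0..1 / (1 + t)} x
         + ennreal (1 / x) * indicator {1 / (1 + t)..1 + t} x
         + ennreal (t / (1 + x)^2) * indicator {1 + t..} x"
proof -
  let ?piecewise = "t * indicator {0..1 / (1 + t)} x + 1 / x * indicator {1 / (1 + t)..1 + t} x
                  + t / (1 + x)^2 * indicator {1 + t..} x"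
  have nonneg: "0 \<le> t * indicator {0..1 / (1 + t)} x" "0 \<le> 1 / x * indicator {1 / (1 + t)..1 + t} x"
      "0 \<le> t / (1 + x)^2 * indicator {1 + t..} x"
    using assms by auto
  have "min (t / (1 + x)^2) (1 / x) \<le> ?piecewise"
  proof (cases "x \<le> 1 / (1 + t)")
    case True
    have "1 \<le> (1 + x)^2"
      using assms by (intro one_le_power) simp
    then have "t / (1 + x)^2 \<le> t"
      using assms by (simp add: divide_le_eq mult_le_cancel_left1)
    then have "min (t / (1 + x)^2) (1 / x) \<le> t * indicator {0..1 / (1 + t)} x"
      using True assms by simp
    then show ?thesis
      using nonneg by linarith
  next
    case False
    show ?thesis
    proof (cases "x \<le> 1 + t")
      case True
      then have "min (t / (1 + x)^2) (1 / x) \<le> 1 / x * indicator {1 / (1 + t)..1 + t} x"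
        using False by simp
      then show ?thesis
        using nonneg by linarith
    next
      case False
      then have "min (t / (1 + x)^2) (1 / x) \<le> t / (1 + x)^2 * indicator {1 + t..} x"
        by simp
      then show ?thesis
        using nonneg by linarith
    qed
  qed
  moreover have "norm (deriv (f_t t) (Complex x y)) \<le> 2 / (1 + x)^2 + min (t / (1 + x)^2) (1 / x)"
    using norm_deriv_f_t_le[of t "Complex x y"] assms by simp
  ultimately have "norm (deriv (f_t t) (Complex x y)) \<le> 2 / (1 + x)^2 * indicator {0..} x + ?piecewise"
    using assms by simp
  then have "ennreal (norm (deriv (f_t t) (Complex x y))) \<le>
      ennreal (2 / (1 + x)^2 * indicator {0..} x + t * indicator {0..1 / (1 + t)} x
             + 1 / x * indicator {1 / (1 + t)..1 + t} x + t / (1 + x)^2 * indicator {1 + t..} x)"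
    by (simp add: ennreal_leI add.assoc)
  also have "\<dots> = ennreal (2 / (1 + x)^2) * indicator {0..} x + ennreal t * indicator {0..1 / (1 + t)} x
      + ennreal (1 / x) * indicator {1 / (1 + t)..1 + t} x + ennreal (t / (1 + x)^2) * indicator {1 + t..} x"
    using assms by (simp add: ennreal_plus split: split_indicator)
  finally show ?thesis .
qed

lemma nn_integral_shifted_inverse_square:
  fixes a c :: real
  assumes "c \<ge> 0" "a > -1"
  shows "(\<integral>\<^sup>+x. ennreal (c / (1 + x)^2) * indicator {a..} x \<partial>lborel) = ennreal (c / (1 + a))"
proof -
  have "(\<integral>\<^sup>+x. ennreal (c / (1 + x)^2) * indicator {a..} x \<partial>lborel) = ennreal (0 - (- c / (1 + a)))"
  proof (rule nn_integral_FTC_atLeast)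
    show "(\<lambda>x::real. c / (1 + x)^2) \<in> borel_measurable borel"
      by measurable
    show "((\<lambda>x. - c / (1 + x)) has_real_derivative c / (1 + x)^2) (at x)" if "a \<le> x" for x
      using that assms by (auto intro!: derivative_eq_intros simp: power2_eq_square field_simps)
    show "0 \<le> c / (1 + x)^2" for x
      using assms by simp
    have "filterlim (\<lambda>x::real. 1 + x) at_infinity at_top"
      by (intro filterlim_at_top_imp_at_infinity
          filterlim_tendsto_add_at_top[OF tendsto_const filterlim_ident])
    then show "((\<lambda>x. - c / (1 + x)) \<longlongrightarrow> 0) at_top"
      by (intro tendsto_divide_0[OF tendsto_const])
  qed
  then show ?thesis
    by simp
qed

lemma nn_integral_inverse_Icc:
  fixes a b :: real
  assumes "0 < a" "a \<le> b"
  shows "(\<integral>\<^sup>+x. ennreal (1 / x) * indicator {a..b} x \<partial>lborel) = ennreal (ln b - ln a)"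
proof (rule nn_integral_FTC_Icc)
  show "(\<lambda>x::real. 1 / x) \<in> borel_measurable borel"
    by measurable
  show "(ln has_real_derivative 1 / x) (at x)" if "x \<in> {a..b}" for x
    using that assms by (auto intro!: derivative_eq_intros simp: field_simps)
qed (use assms in auto)

lemma B_deriv_part_f_t_le:
  assumes "t \<ge> 0"
  shows "B_deriv_part (f_t t) \<le> ennreal (4 + 2 * ln (1 + t))"
proof -
  let ?S = "\<lambda>x. (SUP y. ennreal (norm (deriv (f_t t) (Complex x y))))"
  let ?P1 = "\<lambda>x. ennreal (2 / (1 + x)^2) * indicator {0..} x"
  let ?P2 = "\<lambda>x. ennreal t * indicator {0..1 / (1 + t)} x"
  let ?P3 = "\<lambda>x. ennreal (1 / x) * indicator {1 / (1 + t)..1 + t} x"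
  let ?P4 = "\<lambda>x. ennreal (t / (1 + x)^2) * indicator {1 + t..} x"
  have pos: "0 < 1 / (1 + t)" "1 / (1 + t) \<le> 1 + t"
    using assms by (auto simp: field_simps)
  have "B_deriv_part (f_t t) = (\<integral>\<^sup>+x. ?S x * indicator {0<..} x \<partial>lborel)"
    unfolding B_deriv_part_def by (rule nn_integral_restrict_space) simp
  also have "\<dots> \<le> (\<integral>\<^sup>+x. ?P1 x + ?P2 x + ?P3 x + ?P4 x \<partial>lborel)"
  proof (rule nn_integral_mono)
    fix x :: real
    show "?S x * indicator {0<..} x \<le> ?P1 x + ?P2 x + ?P3 x + ?P4 x"
    proof (cases "x > 0")
      case True
      then have "?S x \<le> ?P1 x + ?P2 x + ?P3 x + ?P4 x"
        using ennreal_norm_deriv_f_t_le[OF assms] by (intro SUP_least) auto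
      then show ?thesis
        using True by simp
    qed simp
  qed
  also have "\<dots> = (\<integral>\<^sup>+x. ?P1 x \<partial>lborel) + (\<integral>\<^sup>+x. ?P2 x \<partial>lborel)
      + (\<integral>\<^sup>+x. ?P3 x \<partial>lborel) + (\<integral>\<^sup>+x. ?P4 x \<partial>lborel)"
    by (simp add: nn_integral_add)
  also have "\<dots> = ennreal 2 + ennreal (t / (1 + t)) + ennreal (2 * ln (1 + t)) + ennreal (t / (2 + t))"
  proof -
    have "(\<integral>\<^sup>+x. ?P2 x \<partial>lborel) = ennreal (t / (1 + t))"
      using pos assms by (simp add: nn_integral_cmult_indicator flip: ennreal_mult)
    then show ?thesis
      using nn_integral_shifted_inverse_square[of 2 0] nn_integral_shifted_inverse_square[of t "1 + t"]
        nn_integral_inverse_Icc[OF pos] assms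
      by (simp add: ln_div add.assoc)
  qed
  also have "\<dots> = ennreal (2 + t / (1 + t) + 2 * ln (1 + t) + t / (2 + t))"
    using assms by (simp add: ennreal_plus)
  also have "\<dots> \<le> ennreal (4 + 2 * ln (1 + t))"
  proof (rule ennreal_leI)
    have "t / (1 + t) \<le> 1" "t / (2 + t) \<le> 1"
      using assms by simp_all
    then show "2 + t / (1 + t) + 2 * ln (1 + t) + t / (2 + t) \<le> 4 + 2 * ln (1 + t)"
      by linarith
  qed
  finally show ?thesis .
qed

lemma B_sup_part_f_t_le_1:
  assumes "t \<ge> 0"
  shows "B_sup_part (f_t t) \<le> 1"
  unfolding B_sup_part_def rhp_def
  using norm_f_t_le_1[OF assms] by (intro SUP_least) simp

lemma B_norm_f_t_le:
  assumes "t \<ge> 0"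
  shows "B_norm (f_t t) \<le> ennreal (5 + 2 * ln (1 + t))"
proof -
  have "B_norm (f_t t) \<le> ennreal 1 + ennreal (4 + 2 * ln (1 + t))"
    unfolding B_norm_def
    using B_sup_part_f_t_le_1[OF assms] B_deriv_part_f_t_le[OF assms] by (intro add_mono) simp_all
  also have "\<dots> = ennreal (5 + 2 * ln (1 + t))"
    using ennreal_plus[of 1 "4 + 2 * ln (1 + t)"] assms by simp
  finally show ?thesis .
qed

theorem lemma3p5:
  shows "\<exists>C::real. \<forall>t::real. t > 0 \<longrightarrow>
           in_B (f_t t) \<and> B_norm (f_t t) \<le> ennreal (C * (1 + ln (1 + t)))"
proof (intro exI allI impI)
  fix t :: real
  assume "t > 0"
  then have "B_norm (f_t t) \<le> ennreal (5 + 2 * ln (1 + t))"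
    by (intro B_norm_f_t_le) simp
  also have "\<dots> \<le> ennreal (5 * (1 + ln (1 + t)))"
    using \<open>t > 0\<close> by (intro ennreal_leI) simp
  finally show "in_B (f_t t) \<and> B_norm (f_t t) \<le> ennreal (5 * (1 + ln (1 + t)))"
    unfolding in_B_def using holomorphic_on_f_t by (simp add: le_less_trans)
qed

end
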